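(* Let $r\ge4$ be an even integer and let $M$ be the binary matroid represented over $\mathrm{GF}(2)$ by the matrix $[I_r\;\;J_r-I_r]$, where $I_r$ is the $r\times r$ identity matrix and $J_r$ the $r\times r$ all-ones matrix. Then $M$ is not elementarily $(r,3)$-weakly base orderable.
   Context: An ordered pair $(B_1,B_2)$ of bases of a matroid has the elementary $k$-exchange property if there exist $k$-element subsets $X\subseteq B_1\setminus B_2$, $Y\subseteq B_2\setminus B_1$ and a bijection $\varphi\colon X\to Y$ such that $(B_1\setminus Z)\cup\varphi(Z)$ is a basis for every $Z\subseteq X$. A matroid is elementarily $(\alpha,k)$-weakly base orderable if every ordered pair $(B_1,B_2)$ of bases with $|B_1\setminus B_2|\ge\alpha$ has the elementary $k$-exchange property. *)

theory Defs
  imports Main "HOL-Library.Z2"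
begin

text \<open>The matrix [I_r | J_r - I_r] over GF(2) (type bit).  Columns are indexed by
  0..<2r, rows by 0..<r.  Column c < r is e_c; column r+j is the all-ones vector minus e_j.\<close>
definition mat_entry :: "nat \<Rightarrow> nat \<Rightarrow> nat \<Rightarrow> bit" where
  "mat_entry r i c = (if c < r then (if i = c then 1 else 0)
                      else (if i = c - r then 0 else 1))"

definition bin_indep :: "nat \<Rightarrow> nat set \<Rightarrow> bool" where
  "bin_indep r X \<longleftrightarrow> X \<subseteq> {..<2*r} \<and>
     (\<forall>S\<subseteq>X. S \<noteq> {} \<longrightarrow> (\<exists>i<r. (\<Sum>c\<in>S. mat_entry r i c) \<noteq> 0))"

definition bin_basis :: "nat \<Rightarrow> nat set \<Rightarrow> bool" where
  "bin_basis r B \<longleftrightarrow> bin_indep r B \<and> (\<forall>X. bin_indep r X \<longrightarrow> B \<subseteq> X \<longrightarrow> X = B)"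

definition elem_exchange :: "('a set \<Rightarrow> bool) \<Rightarrow> nat \<Rightarrow> 'a set \<Rightarrow> 'a set \<Rightarrow> bool" where
  "elem_exchange is_basis k B1 B2 \<longleftrightarrow>
     (\<exists>X Y \<phi>. X \<subseteq> B1 - B2 \<and> Y \<subseteq> B2 - B1 \<and> finite X \<and> card X = k \<and> card Y = k \<and>
        bij_betw \<phi> X Y \<and> (\<forall>Z\<subseteq>X. is_basis ((B1 - Z) \<union> \<phi> ` Z)))"

definition elem_wbo :: "('a set \<Rightarrow> bool) \<Rightarrow> nat \<Rightarrow> nat \<Rightarrow> bool" where
  "elem_wbo is_basis \<alpha> k \<longleftrightarrow>
     (\<forall>B1 B2. is_basis B1 \<and> is_basis B2 \<and> card (B1 - B2) \<ge> \<alpha> \<longrightarrow> elem_exchange is_basis k B1 B2)"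

end

theory Submission
  imports Defs
begin

text \<open>Write \<open>e\<^sub>i\<close> for column \<open>i\<close> and \<open>f\<^sub>i = \<one> + e\<^sub>i\<close> for column \<open>r + i\<close>
  (\<open>i < r\<close>), and take \<open>B\<^sub>1 = {e\<^sub>i}\<close>, \<open>B\<^sub>2 = {f\<^sub>i}\<close>; the latter is a basis as \<open>r\<close> is even.
  An elementary 3-exchange is given by a 3-set \<open>X\<close> and a map \<open>\<pi>\<close> with \<open>\<phi>(e\<^sub>x) = f\<^sub>\<pi>\<^sub>x\<close>.
  Exchanging a single \<open>e\<^sub>x\<close> forces \<open>\<pi> x \<noteq> x\<close>, since \<open>f\<^sub>x\<close> is the sum of the remaining \<open>e\<^sub>i\<close>;
  exchanging a pair \<open>{x, y}\<close> forces \<open>\<pi> x\<close> or \<open>\<pi> y\<close> into \<open>{x, y}\<close>, since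
  \<open>f\<^sub>p + f\<^sub>q = e\<^sub>p + e\<^sub>q\<close>. These constraints make \<open>\<pi>\<close> a cyclic permutation of \<open>X\<close>, but then
  exchanging all of \<open>X\<close> fails because \<open>\<Sum>\<^sub>x\<^sub>\<in>\<^sub>X f\<^sub>x = \<Sum>\<^sub>i\<^sub>\<notin>\<^sub>X e\<^sub>i\<close> for odd \<open>|X|\<close>.\<close>

lemma of_nat_bit: "(of_nat n :: bit) = (if even n then 0 else 1)"
  by (induct n) auto

lemma sum_mat_entry_units:
  assumes "T \<subseteq> {..<r}"
  shows "(\<Sum>c\<in>T. mat_entry r i c) = (if i \<in> T then 1 else 0)"
proof -
  have "(\<Sum>c\<in>T. mat_entry r i c) = (\<Sum>c\<in>T. if i = c then 1 else 0)"
    using assms by (intro sum.cong) (auto simp: mat_entry_def)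
  then show ?thesis
    using assms finite_subset by fastforce
qed

lemma sum_mat_entry_nonunits:
  assumes "S \<subseteq> {r..<2*r}"
  shows "(\<Sum>c\<in>S. mat_entry r i c) = of_nat (card (S - {r + i}))"
proof -
  have "(\<Sum>c\<in>S. mat_entry r i c) = (\<Sum>c\<in>S. if c \<in> S - {r + i} then 1 else 0)"
    using assms by (intro sum.cong) (auto simp: mat_entry_def)
  also have "\<dots> = (\<Sum>c\<in>S \<inter> (S - {r + i}). 1)"
    using assms finite_subset by (intro sum.inter_restrict[symmetric]) blast
  finally show ?thesis
    by (simp add: Int_absorb1)
qed

lemma nonunit_column_cases:
  fixes c r :: nat
  assumes "c \<in> {r..<2*r}"
  obtains p where "p < r" "c = r + p"
  using assms by (metis atLeastLessThan_iff le_add_diff_inverse mult_2 nat_add_left_cancel_less)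

lemma bin_indep_subset: "bin_indep r B \<Longrightarrow> A \<subseteq> B \<Longrightarrow> bin_indep r A"
  unfolding bin_indep_def by blast

lemma not_bin_indep_if_zero_sum:
  assumes "S \<subseteq> B" "S \<noteq> {}" "\<And>i. i < r \<Longrightarrow> (\<Sum>c\<in>S. mat_entry r i c) = 0"
  shows "\<not> bin_indep r B"
  using assms unfolding bin_indep_def by blast

lemma bin_basisI:
  assumes "bin_indep r B" "\<And>c. c < 2*r \<Longrightarrow> c \<notin> B \<Longrightarrow> \<not> bin_indep r (insert c B)"
  shows "bin_basis r B"
  unfolding bin_basis_def
proof (intro conjI allI impI)
  fix X assume X: "bin_indep r X" "B \<subseteq> X"
  show "X = B"
  proof (rule ccontr)
    assume "X \<noteq> B"
    then obtain c where "c \<in> X" "c \<notin> B"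
      using X(2) by blast
    moreover from \<open>c \<in> X\<close> X(1) have "c < 2*r"
      by (auto simp: bin_indep_def)
    ultimately show False
      using assms(2) X bin_indep_subset[of r X "insert c B"] by blast
  qed
qed (rule assms(1))

lemma not_bin_indep_odd_exchange:
  assumes "X \<subseteq> {..<r}" "odd (card X)" "({..<r} - X) \<union> (+) r ` X \<subseteq> B"
  shows "\<not> bin_indep r B"
proof (rule not_bin_indep_if_zero_sum[OF assms(3)])
  have "finite X"
    using assms(1) finite_subset by blast
  then show "({..<r} - X) \<union> (+) r ` X \<noteq> {}"
    using assms(2) by (auto simp: card_eq_0_iff)
  fix i assume "i < r"
  have units: "(\<Sum>c\<in>{..<r} - X. mat_entry r i c) = (if i \<in> X then 0 else 1)"
    using \<open>i < r\<close> by (simp add: sum_mat_entry_units)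
  have "(+) r ` X - {r + i} = (+) r ` (X - {i})"
    by auto
  then have "card ((+) r ` X - {r + i}) = (if i \<in> X then card X - 1 else card X)"
    using \<open>finite X\<close> by (simp add: card_image card_Diff_singleton_if)
  moreover have "(+) r ` X \<subseteq> {r..<2*r}"
    using assms(1) by auto
  ultimately have nonunits: "(\<Sum>c\<in>(+) r ` X. mat_entry r i c) = (if i \<in> X then 0 else 1)"
    using \<open>finite X\<close> assms(2)
    by (auto simp: sum_mat_entry_nonunits of_nat_bit card_gt_0_iff)
  have "(\<Sum>c\<in>({..<r} - X) \<union> (+) r ` X. mat_entry r i c)
      = (\<Sum>c\<in>{..<r} - X. mat_entry r i c) + (\<Sum>c\<in>(+) r ` X. mat_entry r i c)"
    using \<open>finite X\<close> by (intro sum.union_disjoint) auto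
  then show "(\<Sum>c\<in>({..<r} - X) \<union> (+) r ` X. mat_entry r i c) = 0"
    by (simp add: units nonunits)
qed

lemma not_bin_indep_two_exchange:
  assumes "p < r" "q < r" "p \<noteq> q" "{r + p, r + q, p, q} \<subseteq> B"
  shows "\<not> bin_indep r B"
  by (rule not_bin_indep_if_zero_sum[OF assms(4)]) (use assms(1-3) in \<open>auto simp: mat_entry_def\<close>)

lemma bin_basis_units: "bin_basis r {..<r}"
proof (rule bin_basisI)
  show "bin_indep r {..<r}"
    unfolding bin_indep_def
  proof (intro conjI allI impI)
    fix S assume S: "S \<subseteq> {..<r}" "S \<noteq> {}"
    then obtain i where "i \<in> S"
      by blast
    then show "\<exists>i<r. (\<Sum>c\<in>S. mat_entry r i c) \<noteq> 0"
      using S by (intro exI[of _ i]) (auto simp: sum_mat_entry_units)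
  qed simp
next
  fix c assume "c < 2*r" "c \<notin> {..<r}"
  then obtain p where "p < r" "c = r + p"
    using nonunit_column_cases[of c r] by auto
  then show "\<not> bin_indep r (insert c {..<r})"
    by (intro not_bin_indep_odd_exchange[of "{p}"]) auto
qed

lemma bin_indep_nonunits:
  assumes "even r"
  shows "bin_indep r {r..<2*r}"
  unfolding bin_indep_def
proof (intro conjI allI impI)
  fix S assume S: "S \<subseteq> {r..<2*r}" "S \<noteq> {}"
  have "finite S"
    using S finite_subset by blast
  have "\<exists>i<r. odd (card (S - {r + i}))"
  proof (cases "even (card S)")
    case True
    obtain i where "i < r" "r + i \<in> S"
      using S by (metis nonunit_column_cases subset_iff ex_in_conv)
    then show ?thesis
      using True \<open>finite S\<close> S(2) by (intro exI[of _ i]) (auto simp: card_gt_0_iff)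
  next
    case False
    then have "S \<noteq> {r..<2*r}"
      using assms by auto
    then obtain c where "c \<in> {r..<2*r}" "c \<notin> S"
      using S(1) by blast
    then obtain i where "i < r" "r + i \<notin> S"
      by (metis nonunit_column_cases)
    then show ?thesis
      using False by (intro exI[of _ i]) simp
  qed
  then obtain i where "i < r" "odd (card (S - {r + i}))"
    by blast
  then show "\<exists>i<r. (\<Sum>c\<in>S. mat_entry r i c) \<noteq> 0"
    using S(1) by (intro exI[of _ i]) (simp add: sum_mat_entry_nonunits of_nat_bit)
qed auto

lemma bin_basis_nonunits:
  assumes "even r"
  shows "bin_basis r {r..<2*r}"
proof (rule bin_basisI[OF bin_indep_nonunits[OF assms]])
  fix c assume "c < 2*r" "c \<notin> {r..<2*r}"
  then have "c < r"
    by simp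
  have "({..<r} - ({..<r} - {c})) \<union> (+) r ` ({..<r} - {c}) \<subseteq> insert c {r..<2*r}"
    using \<open>c < r\<close> by auto
  moreover have "odd (card ({..<r} - {c}))"
    using assms \<open>c < r\<close> by simp
  ultimately show "\<not> bin_indep r (insert c {r..<2*r})"
    by (intro not_bin_indep_odd_exchange) auto
qed

lemma fixpoint_free_three_set_permutes:
  assumes "card X = 3" "\<And>x. x \<in> X \<Longrightarrow> \<pi> x \<noteq> x"
    "\<And>x y. x \<in> X \<Longrightarrow> y \<in> X \<Longrightarrow> x \<noteq> y \<Longrightarrow> \<pi> x \<in> {x, y} \<or> \<pi> y \<in> {x, y}"
  shows "\<pi> ` X = X"
proof -
  obtain a b c where X: "X = {a, b, c}" "a \<noteq> b" "a \<noteq> c" "b \<noteq> c"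
    using assms(1) card_3_iff by metis
  have "\<pi> a = b \<or> \<pi> b = a" "\<pi> a = c \<or> \<pi> c = a" "\<pi> b = c \<or> \<pi> c = b"
    using assms(2) assms(3)[of a b] assms(3)[of a c] assms(3)[of b c] X by auto
  then show ?thesis
    using X by auto
qed

lemma unit_exchange_permutes:
  assumes X: "X \<subseteq> {..<r}" "card X = 3" "inj_on \<pi> X" "\<And>x. x \<in> X \<Longrightarrow> \<pi> x < r"
    and exchange: "\<And>Z. Z \<subseteq> X \<Longrightarrow> bin_indep r (({..<r} - Z) \<union> (\<lambda>x. r + \<pi> x) ` Z)"
  shows "\<pi> ` X = X"
proof (rule fixpoint_free_three_set_permutes[OF X(2)])
  show "\<pi> x \<noteq> x" if "x \<in> X" for x
  proof
    assume "\<pi> x = x"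
    then have "bin_indep r (({..<r} - {x}) \<union> (+) r ` {x})"
      using exchange[of "{x}"] that by simp
    then show False
      using not_bin_indep_odd_exchange[of "{x}" r] X(1) that by auto
  qed
  show "\<pi> x \<in> {x, y} \<or> \<pi> y \<in> {x, y}" if "x \<in> X" "y \<in> X" "x \<noteq> y" for x y
  proof (rule ccontr)
    assume outside: "\<not> (\<pi> x \<in> {x, y} \<or> \<pi> y \<in> {x, y})"
    have "\<pi> x \<noteq> \<pi> y"
      using X(3) that by (meson inj_onD)
    have "bin_indep r (({..<r} - {x, y}) \<union> {r + \<pi> x, r + \<pi> y})"
      using exchange[of "{x, y}"] that by simp
    moreover have "{r + \<pi> x, r + \<pi> y, \<pi> x, \<pi> y} \<subseteq> ({..<r} - {x, y}) \<union> {r + \<pi> x, r + \<pi> y}"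
      using outside X(4) that by auto
    ultimately show False
      using not_bin_indep_two_exchange X(4) that \<open>\<pi> x \<noteq> \<pi> y\<close> by blast
  qed
qed

theorem theorem5p22:
  fixes r :: nat
  assumes "r \<ge> 4" and "even r"
  shows "\<not> elem_wbo (bin_basis r) r 3"
proof
  assume "elem_wbo (bin_basis r) r 3"
  moreover have "{..<r} - {r..<2*r} = {..<r}"
    by auto
  ultimately have "elem_exchange (bin_basis r) 3 {..<r} {r..<2*r}"
    using bin_basis_units bin_basis_nonunits[OF assms(2)] unfolding elem_wbo_def by simp
  then obtain X Y \<phi> where "X \<subseteq> {..<r} - {r..<2*r}" "Y \<subseteq> {r..<2*r} - {..<r}" "card X = 3"
    "bij_betw \<phi> X Y" and basis: "\<And>Z. Z \<subseteq> X \<Longrightarrow> bin_basis r (({..<r} - Z) \<union> \<phi> ` Z)"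
    unfolding elem_exchange_def by blast
  then have X: "X \<subseteq> {..<r}" "card X = 3" "\<phi> ` X \<subseteq> {r..<2*r}" "inj_on \<phi> X"
    by (auto simp: bij_betw_def)
  define \<pi> where "\<pi> x = \<phi> x - r" for x
  have \<phi>: "\<phi> x = r + \<pi> x" "\<pi> x < r" if "x \<in> X" for x
    using X(3) that unfolding \<pi>_def by (auto simp: image_subset_iff)
  have exchange: "bin_indep r (({..<r} - Z) \<union> (\<lambda>x. r + \<pi> x) ` Z)" if "Z \<subseteq> X" for Z
    using basis[OF that] \<phi>(1) that by (auto simp: bin_basis_def subset_iff cong: image_cong)
  have "inj_on \<pi> X"
    using X(4) \<phi>(1) by (auto simp: inj_on_def)
  then have "\<pi> ` X = X"
    using unit_exchange_permutes X(1,2) \<phi>(2) exchange by blast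
  then have "(\<lambda>x. r + \<pi> x) ` X = (+) r ` X"
    by (metis image_image)
  then show False
    using exchange[of X] not_bin_indep_odd_exchange[of X r] X(1,2) by simp
qed

end
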